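(* Let $E$ be a finite set and $p$ the transition matrix of an irreducible time-homogeneous Markov chain on $E$ admitting a reversible probability measure $\mu$ (i.e. $p(x,y)\mu(x)=p(y,x)\mu(y)$ for all $x,y$). Let $d$ be the graph distance on $E$ for the graph in which $x,y$ are joined by an edge iff $p(x,y)>0$. Let $L=p-I$ and let $0=\lambda^{(0)}\leq\lambda^{(1)}\leq\cdots$ be the eigenvalues of the symmetric nonnegative operator $-L$ on $L^2(\mu)$, in increasing order counted with multiplicity. Then for any $k\geq1$ and all sets $A_1,\ldots,A_k\subset E$ with $\min_{i\neq j}d(A_i,A_j)\geq 1$ and $(\mu(A_1),\ldots,\mu(A_k))\in\Delta_k$, the set $B=A_1\cup\cdots\cup A_k$ satisfies \[ \mu(B_n)\geq 1-(1-\mu(B))\left(1+\lambda^{(k)}\right)^{-n} \] for all integers $1\leq n\leq\frac12\min_{i\neq j}d(A_i,A_j)$.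
   Context: For $A,B\subset E$, $d(A,B)=\min\{d(x,y):x\in A,y\in B\}$. For $B\subset E$ and an integer $n\geq1$, $B_n=\{x\in E: d(x,B)\leq n\}$ (the graph $n$-neighbourhood of $B$). For $k\geq1$, $\Delta_k$ is the set of $(a_1,\ldots,a_k)\in[0,1]^k$ with $\sum_{j=1}^k a_j\leq1$ and $a_i+\sum_{j=1}^k a_j\geq1$ for every $i$. *)

theory Defs
  imports "HOL-Analysis.Analysis"
begin

text \<open>State space E is the finite type 'n; functions on E are vectors real^'n,
  the transition matrix is P :: real^'n^'n with P$x$y = p(x,y).\<close>

definition stochastic :: "real^'n^'n \<Rightarrow> bool" where
  "stochastic P \<longleftrightarrow> (\<forall>x y. 0 \<le> P$x$y) \<and> (\<forall>x. (\<Sum>y\<in>UNIV. P$x$y) = 1)"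

definition edges :: "real^'n^'n \<Rightarrow> ('n \<times> 'n) set" where
  "edges P = {(x, y). P$x$y > 0}"

definition irreducible :: "real^'n^'n \<Rightarrow> bool" where
  "irreducible P \<longleftrightarrow> (\<forall>x y. (x, y) \<in> (edges P)\<^sup>+)"

definition reversible_prob :: "real^'n^'n \<Rightarrow> ('n \<Rightarrow> real) \<Rightarrow> bool" where
  "reversible_prob P mu \<longleftrightarrow> (\<forall>x. 0 \<le> mu x) \<and> (\<Sum>x\<in>UNIV. mu x) = 1
     \<and> (\<forall>x y. P$x$y * mu x = P$y$x * mu y)"

definition gdist :: "real^'n^'n \<Rightarrow> 'n \<Rightarrow> 'n \<Rightarrow> nat" where
  "gdist P x y = (LEAST n. (x, y) \<in> (edges P) ^^ n)"

text \<open>Set distance d(A,B) = min over x in A, y in B (infinity if a set is empty).\<close>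
definition set_dist :: "real^'n^'n \<Rightarrow> 'n set \<Rightarrow> 'n set \<Rightarrow> enat" where
  "set_dist P A B = (INF x\<in>A. INF y\<in>B. enat (gdist P x y))"

definition nbhd :: "real^'n^'n \<Rightarrow> 'n set \<Rightarrow> nat \<Rightarrow> 'n set" where
  "nbhd P B n = {x. set_dist P {x} B \<le> enat n}"

definition meas :: "('n \<Rightarrow> real) \<Rightarrow> 'n set \<Rightarrow> real" where
  "meas mu A = (\<Sum>x\<in>A. mu x)"

text \<open>Eigenvalues of -L = I - p, and their multiplicities (eigenspace dimensions;
  -L is self-adjoint on L^2(mu), so geometric = algebraic multiplicity).\<close>
definition eigenspace_negL :: "real^'n^'n \<Rightarrow> real \<Rightarrow> (real^'n) set" where
  "eigenspace_negL P l = {f. (mat 1 - P) *v f = l *\<^sub>R f}"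

definition eigenvalues_negL :: "real^'n^'n \<Rightarrow> real set" where
  "eigenvalues_negL P = {l. \<exists>f. f \<noteq> 0 \<and> (mat 1 - P) *v f = l *\<^sub>R f}"

text \<open>Increasing list of eigenvalues counted with multiplicity; lambda^(k) is entry k (0-based,
  so entry 0 is lambda^(0) = 0).\<close>
definition eigen_list :: "real^'n^'n \<Rightarrow> real list" where
  "eigen_list P = sort (concat (map (\<lambda>l. replicate (dim (eigenspace_negL P l)) l)
                                   (sorted_list_of_set (eigenvalues_negL P))))"

definition lam :: "real^'n^'n \<Rightarrow> nat \<Rightarrow> real" where
  "lam P k = eigen_list P ! k"

definition in_Delta :: "nat \<Rightarrow> (nat \<Rightarrow> real) \<Rightarrow> bool" where
  "in_Delta k a \<longleftrightarrow> (\<forall>i\<in>{1..k}. 0 \<le> a i \<and> a i \<le> 1) \<and> (\<Sum>j=1..k. a j) \<le> 1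
     \<and> (\<forall>i\<in>{1..k}. a i + (\<Sum>j=1..k. a j) \<ge> 1)"

end

(* Write B_m for the m-neighbourhood of B and N_m = mu(E - B_m). For 1 <= m <= n the k + 1 sets
   E - B_m and (A_i)_(m-1), i = 1..k, are pairwise disjoint and no edge of the chain joins two of
   them, since distinct A_i are at distance at least 2n; by the Delta_k condition each of them has
   measure at least N_m. Functions that are constant on each of these sets and vanish elsewhere form
   a (k + 1)-dimensional space on which the Dirichlet form <(I - p) f, f>_mu is at most
   mu(B_m - B_(m-1)) / N_m times <f, f>_mu, so the min-max principle gives
   lambda^(k) N_m <= N_(m-1) - N_m. Iterating from N_0 <= 1 - mu(B) yields the bound.
   The min-max principle is applied to a symmetric matrix similar to I - p. *)

theory Submission
  imports Defs
begin

section \<open>Min-max principle for self-adjoint operators\<close>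

lemma dim_Un_le:
  fixes A B :: "'a::euclidean_space set"
  shows "dim (A \<union> B) \<le> dim A + dim B"
proof -
  have "dim (A \<union> B) = dim (span (A \<union> B))" by simp
  also have "span (A \<union> B) = {x + y |x y. x \<in> span A \<and> y \<in> span B}" by (rule span_Un)
  also have "dim \<dots> \<le> dim (span A) + dim (span B)"
    using dim_sums_Int[of "span A" "span B"] by simp
  finally show ?thesis by simp
qed

lemma dim_UN_le:
  fixes S :: "'b \<Rightarrow> 'a::euclidean_space set"
  assumes "finite F"
  shows "dim (\<Union>l\<in>F. S l) \<le> (\<Sum>l\<in>F. dim (S l))"
  using assms
proof (induction F rule: finite_induct)
  case (insert x F)
  have "dim (\<Union>l\<in>insert x F. S l) \<le> dim (S x) + dim (\<Union>l\<in>F. S l)"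
    using dim_Un_le by simp
  with insert show ?case by simp
qed simp

lemma linear_coeff_eq_0_if_quadratic_nonneg:
  fixes a b :: real
  assumes nonneg: "\<And>t. 0 \<le> b * t + a * t\<^sup>2"
  shows "b = 0"
proof (rule ccontr)
  assume "b \<noteq> 0"
  define s where "s = \<bar>a\<bar> + 1"
  have "s > 0" "a < s" by (simp_all add: s_def)
  then have "b * (- b / s) + a * (- b / s)\<^sup>2 = b\<^sup>2 * (a - s) / s\<^sup>2"
    by (simp add: field_simps power2_eq_square)
  also have "\<dots> < 0"
    using \<open>b \<noteq> 0\<close> \<open>a < s\<close> \<open>s > 0\<close> by (simp add: divide_neg_pos mult_pos_neg)
  finally show False using nonneg[of "- b / s"] by simp
qed

lemma rayleigh_min_attained:
  fixes T :: "'a::euclidean_space \<Rightarrow> 'a"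
  assumes lin: "linear T" and W: "subspace W" and f: "f \<in> W" "f \<noteq> 0"
  obtains g where "g \<in> W" "g \<bullet> g = 1" "\<And>y. y \<in> W \<Longrightarrow> (T g \<bullet> g) * (y \<bullet> y) \<le> T y \<bullet> y"
proof -
  define q where "q y = T y \<bullet> y" for y
  define K where "K = sphere 0 1 \<inter> W"
  have "compact K"
    unfolding K_def by (intro compact_Int_closed compact_sphere closed_subspace W)
  moreover have "continuous_on K q"
    unfolding q_def using lin
    by (intro continuous_intros) (auto intro: linear_continuous_on_compose linear_linear)
  moreover have "f /\<^sub>R norm f \<in> K"
    using f W by (auto simp: K_def subspace_scale)
  ultimately obtain g where g: "g \<in> K" and g_min: "\<And>y. y \<in> K \<Longrightarrow> q g \<le> q y"
    using continuous_attains_inf by (metis empty_iff)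
  have q_scale: "q (c *\<^sub>R y) = c\<^sup>2 * q y" for c y
    unfolding q_def by (simp add: linear_scale[OF lin] power2_eq_square)
  have "q g * (y \<bullet> y) \<le> q y" if "y \<in> W" for y
  proof (cases "y = 0")
    case False
    then have "y /\<^sub>R norm y \<in> K"
      using that W by (auto simp: K_def subspace_scale)
    then have "q g \<le> q (y /\<^sub>R norm y)" by (rule g_min)
    also have "\<dots> = q y / (norm y)\<^sup>2"
      by (simp add: q_scale power_inverse divide_inverse_commute)
    finally show ?thesis
      using False by (simp add: pos_le_divide_eq power2_norm_eq_inner mult.commute)
  qed (simp add: q_def linear_0[OF lin])
  moreover have "g \<in> W" "g \<bullet> g = 1" using g by (auto simp: K_def norm_eq_1)
  ultimately show thesis using that by (simp add: q_def)
qed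

lemma rayleigh_minimizer_eigenvector:
  fixes T :: "'a::euclidean_space \<Rightarrow> 'a"
  assumes lin: "linear T" and selfadj: "\<And>g h. T g \<bullet> h = g \<bullet> T h"
    and W: "subspace W" and TW: "T ` W \<subseteq> W"
    and g: "g \<in> W" "g \<bullet> g = 1" and min: "\<And>y. y \<in> W \<Longrightarrow> (T g \<bullet> g) * (y \<bullet> y) \<le> T y \<bullet> y"
  shows "T g = (T g \<bullet> g) *\<^sub>R g"
proof -
  define m where "m = T g \<bullet> g"
  define h where "h = T g - m *\<^sub>R g"
  have h_W: "h \<in> W"
    unfolding h_def using TW g W by (auto intro: subspace_diff subspace_scale)
  \<comment> \<open>First variation: \<open>t \<mapsto> T y \<bullet> y - m * (y \<bullet> y)\<close> along \<open>y = g + t h\<close> is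
    a nonnegative quadratic whose linear coefficient is \<open>2 * (h \<bullet> h)\<close>.\<close>
  have "0 \<le> (2 * (h \<bullet> h)) * t + (T h \<bullet> h - m * (h \<bullet> h)) * t\<^sup>2" for t
  proof -
    have "m * ((g + t *\<^sub>R h) \<bullet> (g + t *\<^sub>R h)) \<le> T (g + t *\<^sub>R h) \<bullet> (g + t *\<^sub>R h)"
      using min W g h_W by (simp add: m_def subspace_add subspace_scale)
    moreover have "T (g + t *\<^sub>R h) \<bullet> (g + t *\<^sub>R h) = m + 2 * t * (T g \<bullet> h) + t\<^sup>2 * (T h \<bullet> h)"
      using selfadj[of h g]
      by (simp add: m_def linear_add[OF lin] linear_scale[OF lin] inner_add_left inner_add_right
          inner_commute power2_eq_square algebra_simps)
    moreover have "T g \<bullet> h = h \<bullet> h + m * (g \<bullet> h)"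
      by (simp add: h_def inner_diff_left inner_commute)
    ultimately show ?thesis
      using g(2) by (simp add: inner_add_left inner_add_right inner_commute
          power2_eq_square algebra_simps)
  qed
  then have "h = 0"
    using linear_coeff_eq_0_if_quadratic_nonneg by fastforce
  then show ?thesis by (simp add: h_def m_def)
qed

lemma dim_le_dim_eigenvectors_if_rayleigh_le:
  fixes T :: "'a::euclidean_space \<Rightarrow> 'a"
  assumes lin: "linear T" and selfadj: "\<And>g h. T g \<bullet> h = g \<bullet> T h"
    and V: "subspace V" and rayleigh: "\<And>g. g \<in> V \<Longrightarrow> T g \<bullet> g \<le> c * (g \<bullet> g)"
  shows "dim V \<le> dim {v. \<exists>l\<le>c. T v = l *\<^sub>R v}"
proof (rule ccontr)
  \<comment> \<open>Otherwise \<open>V\<close> meets the orthogonal complement \<open>W\<close> of the span of these eigenvectors;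
    \<open>W\<close> is invariant, and a Rayleigh minimiser on \<open>W\<close> is an eigenvector in \<open>W\<close> whose eigenvalue
    is at most \<open>c\<close>.\<close>
  define G where "G = {v. \<exists>l\<le>c. T v = l *\<^sub>R v}"
  define U where "U = span G"
  define W where "W = U\<^sup>\<bottom>"
  assume "\<not> dim V \<le> dim {v. \<exists>l\<le>c. T v = l *\<^sub>R v}"
  then have "dim U < dim V" by (simp add: U_def G_def)
  have W: "subspace W" by (simp add: W_def subspace_orthogonal_comp)
  have "dim W + dim U = dim (UNIV :: 'a set)"
    using dim_subspace_orthogonal_to_vectors[of U UNIV]
    by (simp add: W_def U_def orthogonal_comp_def)
  moreover have "dim {x + y |x y. x \<in> V \<and> y \<in> W} + dim (V \<inter> W) = dim V + dim W"
    by (rule dim_sums_Int[OF V W])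
  moreover have "dim {x + y |x y. x \<in> V \<and> y \<in> W} \<le> dim (UNIV :: 'a set)"
    by (rule dim_subset) simp
  ultimately have "dim (V \<inter> W) \<noteq> 0" using \<open>dim U < dim V\<close> by linarith
  then obtain f where f: "f \<in> V" "f \<in> W" "f \<noteq> 0"
    by (metis IntE dim_eq_0 insertI1 subsetI)
  have "T ` G \<subseteq> G"
    by (auto simp: G_def linear_scale[OF lin])
  then have TU: "T ` U \<subseteq> U"
    unfolding U_def span_linear_image[OF lin, symmetric] by (rule span_mono)
  have TW: "T ` W \<subseteq> W"
  proof (clarsimp simp: W_def orthogonal_comp_def orthogonal_def)
    fix y x assume "\<forall>x\<in>U. x \<bullet> y = 0" "x \<in> U"
    then show "x \<bullet> T y = 0" using TU selfadj[of x y] by auto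
  qed
  obtain g where g: "g \<in> W" "g \<bullet> g = 1"
    and g_min: "\<And>y. y \<in> W \<Longrightarrow> (T g \<bullet> g) * (y \<bullet> y) \<le> T y \<bullet> y"
    using rayleigh_min_attained[OF lin W f(2,3)] by blast
  have "(T g \<bullet> g) * (f \<bullet> f) \<le> c * (f \<bullet> f)"
    using g_min[OF f(2)] rayleigh[OF f(1)] by linarith
  then have "T g \<bullet> g \<le> c" using f(3) by simp
  then have "g \<in> U"
    using rayleigh_minimizer_eigenvector[OF lin selfadj W TW g g_min]
    by (auto simp: U_def G_def intro: span_base)
  then have "g \<bullet> g = 0" using g(1) by (simp add: W_def orthogonal_comp_def orthogonal_def)
  then show False using g(2) by simp
qed

lemma finite_eigenvalues_selfadjoint:
  fixes T :: "'a::euclidean_space \<Rightarrow> 'a"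
  assumes selfadj: "\<And>g h. T g \<bullet> h = g \<bullet> T h"
  shows "finite {l. \<exists>v. v \<noteq> 0 \<and> T v = l *\<^sub>R v}"
proof -
  define EV where "EV = {l. \<exists>v. v \<noteq> 0 \<and> T v = l *\<^sub>R v}"
  define v where "v l = (SOME v. v \<noteq> 0 \<and> T v = l *\<^sub>R v)" for l
  have v: "v l \<noteq> 0" "T (v l) = l *\<^sub>R v l" if "l \<in> EV" for l
    using someI_ex[of "\<lambda>v. v \<noteq> 0 \<and> T v = l *\<^sub>R v"] that by (auto simp: EV_def v_def)
  have "inj_on v EV"
  proof (rule inj_onI)
    fix l1 l2 assume "l1 \<in> EV" "l2 \<in> EV" "v l1 = v l2"
    then show "l1 = l2" using v by (metis scaleR_cancel_right)
  qed
  moreover have "pairwise orthogonal (v ` EV)"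
  proof (clarsimp simp: pairwise_def)
    fix l1 l2 assume l: "l1 \<in> EV" "l2 \<in> EV" "v l1 \<noteq> v l2"
    have "l1 * (v l1 \<bullet> v l2) = l2 * (v l1 \<bullet> v l2)"
      using selfadj[of "v l1" "v l2"] v[OF l(1)] v[OF l(2)] by simp
    then show "orthogonal (v l1) (v l2)" using l(3) by (auto simp: orthogonal_def)
  qed
  then have "independent (v ` EV)"
    by (rule pairwise_orthogonal_independent) (use v in auto)
  ultimately show ?thesis
    using finiteI_independent finite_imageD unfolding EV_def by blast
qed

lemma dim_eigenvectors_le_sum_dim_eigenspaces:
  fixes T :: "'a::euclidean_space \<Rightarrow> 'a"
  assumes fin: "finite {l. \<exists>v. v \<noteq> 0 \<and> T v = l *\<^sub>R v}"
  shows "dim {v. \<exists>l\<le>c. T v = l *\<^sub>R v}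
    \<le> (\<Sum>l\<in>{l. (\<exists>v. v \<noteq> 0 \<and> T v = l *\<^sub>R v) \<and> l \<le> c}. dim {v. T v = l *\<^sub>R v})"
proof -
  define F where "F = {l. (\<exists>v. v \<noteq> 0 \<and> T v = l *\<^sub>R v) \<and> l \<le> c}"
  have "{v. \<exists>l\<le>c. T v = l *\<^sub>R v} \<subseteq> span (\<Union>l\<in>F. {v. T v = l *\<^sub>R v})"
  proof clarify
    fix v l assume l: "l \<le> c" "T v = l *\<^sub>R v"
    show "v \<in> span (\<Union>l\<in>F. {v. T v = l *\<^sub>R v})"
    proof (cases "v = 0")
      case False
      then have "l \<in> F" using l by (auto simp: F_def)
      then show ?thesis using l(2) by (intro span_base UN_I[of l]) auto
    qed (simp add: span_zero)
  qed
  then have "dim {v. \<exists>l\<le>c. T v = l *\<^sub>R v} \<le> dim (span (\<Union>l\<in>F. {v. T v = l *\<^sub>R v}))"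
    by (rule dim_subset)
  also have "\<dots> = dim (\<Union>l\<in>F. {v. T v = l *\<^sub>R v})" by simp
  also have "\<dots> \<le> (\<Sum>l\<in>F. dim {v. T v = l *\<^sub>R v})"
    by (rule dim_UN_le) (use fin in \<open>simp add: F_def\<close>)
  finally show ?thesis unfolding F_def .
qed

lemma symmetric_matrix_selfadjoint:
  fixes A :: "real^'n^'n"
  assumes "transpose A = A"
  shows "(A *v x) \<bullet> y = x \<bullet> (A *v y)"
  by (metis assms dot_lmul_matrix vector_transpose_matrix)

lemma sorted_nth_le_if_length_filter_le:
  fixes xs :: "'a::linorder list"
  assumes sorted: "sorted xs" and long: "k < length (filter (\<lambda>x. x \<le> c) xs)"
  shows "k < length xs" and "xs ! k \<le> c"
proof -
  show "k < length xs" using long length_filter_le[of "\<lambda>x. x \<le> c" xs] by linarith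
  show "xs ! k \<le> c"
  proof (rule ccontr)
    assume gt: "\<not> xs ! k \<le> c"
    have "{i. i < length xs \<and> xs ! i \<le> c} \<subseteq> {..<k}"
    proof clarify
      fix i assume i: "i < length xs" "xs ! i \<le> c"
      show "i < k"
      proof (rule ccontr)
        assume "\<not> i < k"
        then have "xs ! k \<le> xs ! i" using sorted_nth_mono[OF sorted _ i(1)] by simp
        then show False using gt i(2) by simp
      qed
    qed
    then have "card {i. i < length xs \<and> xs ! i \<le> c} \<le> k"
      using card_mono[of "{..<k}"] by fastforce
    then show False using long by (simp add: length_filter_conv_card)
  qed
qed

section \<open>Spectrum of a reversible transition matrix\<close>

definition mu_inner :: "('n \<Rightarrow> real) \<Rightarrow> real^'n \<Rightarrow> real^'n \<Rightarrow> real" where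
  "mu_inner mu f g = (\<Sum>x\<in>UNIV. mu x * f$x * g$x)"

definition sqrt_weight :: "('n \<Rightarrow> real) \<Rightarrow> real^'n \<Rightarrow> real^'n" where
  "sqrt_weight mu f = (\<chi> x. sqrt (mu x) * f$x)"

text \<open>The matrix D^(1/2) (I - P) D^(-1/2) with D = diag mu: it is similar to I - P and, by
  reversibility, symmetric.\<close>
definition sym_generator :: "real^'n^'n \<Rightarrow> ('n \<Rightarrow> real) \<Rightarrow> real^'n^'n" where
  "sym_generator P mu = (\<chi> x y. sqrt (mu x) * (mat 1 - P)$x$y / sqrt (mu y))"

lemma generator_apply: "((mat 1 - (P :: real^'n^'n)) *v f)$x = f$x - (\<Sum>y\<in>UNIV. P$x$y * f$y)"
proof -
  have "(mat 1 - P) *v f = f - P *v f"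
    unfolding matrix_vector_mult_diff_rdistrib matrix_vector_mul_lid ..
  then show ?thesis by (simp add: matrix_vector_mult_def)
qed

lemma linear_sqrt_weight: "linear (sqrt_weight mu)"
  by (rule linearI) (simp_all add: sqrt_weight_def vec_eq_iff algebra_simps)

lemma length_filter_eigen_list:
  assumes "finite (eigenvalues_negL P)"
  shows "length (filter (\<lambda>x. x \<le> c) (eigen_list P))
    = (\<Sum>l\<in>{l\<in>eigenvalues_negL P. l \<le> c}. dim (eigenspace_negL P l))"
  using assms
  by (simp add: eigen_list_def filter_sort filter_concat length_concat o_def filter_replicate
      if_distrib sum_list_distinct_conv_sum_set sum.inter_filter cong: if_cong)

lemma eigenvalue_negL_nonneg:
  assumes st: "stochastic P" and l: "l \<in> eigenvalues_negL P"
  shows "0 \<le> l"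
proof -
  obtain f where "f \<noteq> 0" and f: "(mat 1 - P) *v f = l *\<^sub>R f"
    using l by (auto simp: eigenvalues_negL_def)
  define M where "M = Max (range (\<lambda>y. \<bar>f$y\<bar>))"
  have "M \<in> range (\<lambda>y. \<bar>f$y\<bar>)" unfolding M_def by (intro Max_in) auto
  then obtain x where x: "\<bar>f$x\<bar> = M" by auto
  have le_M: "\<bar>f$y\<bar> \<le> M" for y unfolding M_def by (intro Max_ge) auto
  have "M > 0"
  proof -
    obtain y where "f$y \<noteq> 0" using \<open>f \<noteq> 0\<close> by (metis vec_eq_iff zero_index)
    then show ?thesis using le_M[of y] by simp
  qed
  have "f$x - (\<Sum>y\<in>UNIV. P$x$y * f$y) = l * f$x"
    using arg_cong[OF f, of "\<lambda>v. v$x"] unfolding generator_apply by simp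
  then have "(1 - l) * f$x = (\<Sum>y\<in>UNIV. P$x$y * f$y)" by (simp add: algebra_simps)
  then have "\<bar>1 - l\<bar> * M = \<bar>\<Sum>y\<in>UNIV. P$x$y * f$y\<bar>" using x by (metis abs_mult)
  also have "\<dots> \<le> (\<Sum>y\<in>UNIV. \<bar>P$x$y * f$y\<bar>)" by (rule sum_abs)
  also have "\<dots> \<le> (\<Sum>y\<in>UNIV. P$x$y * M)"
    using st le_M by (intro sum_mono) (simp add: stochastic_def abs_mult mult_left_mono)
  also have "\<dots> = M"
    using st by (simp add: stochastic_def flip: sum_distrib_right)
  finally have "\<bar>1 - l\<bar> \<le> 1" using \<open>M > 0\<close> by simp
  then show ?thesis by simp
qed

definition indicator_vec :: "'n set \<Rightarrow> real^'n" where
  "indicator_vec S = (\<chi> x. indicator S x)"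

lemma dim_indicator_vecs:
  fixes K :: "'i \<Rightarrow> 'n::finite set"
  assumes "finite I"
    and disj: "\<And>i j. i \<in> I \<Longrightarrow> j \<in> I \<Longrightarrow> i \<noteq> j \<Longrightarrow> K i \<inter> K j = {}"
    and ne: "\<And>i. i \<in> I \<Longrightarrow> K i \<noteq> {}"
  shows "dim ((\<lambda>i. indicator_vec (K i)) ` I) = card I"
proof -
  have orth: "orthogonal (indicator_vec (K i)) (indicator_vec (K j))"
    if "i \<in> I" "j \<in> I" "i \<noteq> j" for i j
    using disj[OF that]
    by (auto simp: orthogonal_def inner_vec_def indicator_vec_def indicator_def intro!: sum.neutral)
  have nonzero: "indicator_vec (K i) \<noteq> 0" if i: "i \<in> I" for i
  proof -
    obtain x where "x \<in> K i" using ne[OF i] by blast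
    then have "indicator_vec (K i) $ x = 1" by (simp add: indicator_vec_def)
    then show ?thesis by auto
  qed
  have "inj_on (\<lambda>i. indicator_vec (K i)) I"
  proof (rule inj_onI, rule ccontr)
    fix i j assume "i \<in> I" "j \<in> I" "indicator_vec (K i) = indicator_vec (K j)" "i \<noteq> j"
    then show False using orth[of i j] nonzero[of i] by (simp add: orthogonal_self)
  qed
  moreover have "independent ((\<lambda>i. indicator_vec (K i)) ` I)"
    using orth nonzero
    by (intro pairwise_orthogonal_independent) (auto simp: pairwise_def)
  ultimately show ?thesis
    by (simp add: dim_eq_card_independent card_image)
qed

locale positive_reversible =
  fixes P :: "real^'n^'n" and mu :: "'n \<Rightarrow> real"
  assumes reversible: "reversible_prob P mu" and mu_pos: "0 < mu x"
begin

lemma mu_nonneg: "0 \<le> mu x"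
  using mu_pos[of x] by simp

lemma inner_sqrt_weight: "sqrt_weight mu f \<bullet> sqrt_weight mu g = mu_inner mu f g"
  unfolding sqrt_weight_def mu_inner_def inner_vec_def
  by (rule sum.cong) (auto simp: algebra_simps mu_nonneg)

lemma sqrt_weight_eq_iff: "sqrt_weight mu f = sqrt_weight mu g \<longleftrightarrow> f = g"
  using mu_pos by (simp add: sqrt_weight_def vec_eq_iff) (metis less_irrefl)

lemma inj_sqrt_weight: "inj (sqrt_weight mu)"
  by (rule injI) (simp add: sqrt_weight_eq_iff)

lemma sqrt_weight_surj: "sqrt_weight mu (\<chi> x. v$x / sqrt (mu x)) = v"
  using mu_pos by (simp add: sqrt_weight_def vec_eq_iff) (metis less_irrefl)

lemma sym_generator_sqrt_weight:
  "sym_generator P mu *v sqrt_weight mu f = sqrt_weight mu ((mat 1 - P) *v f)"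
proof -
  have "sqrt (mu x) \<noteq> 0" for x using mu_pos[of x] by simp
  then show ?thesis
    by (simp add: sym_generator_def sqrt_weight_def matrix_vector_mult_def vec_eq_iff
        sum_distrib_left)
qed

lemma transpose_sym_generator: "transpose (sym_generator P mu) = sym_generator P mu"
proof -
  have "sqrt (mu y) * (mat 1 - P)$y$x / sqrt (mu x) = sqrt (mu x) * (mat 1 - P)$x$y / sqrt (mu y)"
    for x y
  proof (cases "x = y")
    case False
    have "P$y$x * mu y = P$x$y * mu x" using reversible by (simp add: reversible_prob_def)
    then have "sqrt (mu y) * (sqrt (mu y) * P$y$x) = sqrt (mu x) * (sqrt (mu x) * P$x$y)"
      by (simp add: mu_nonneg mult.assoc[symmetric] mult.commute)
    then show ?thesis
      using mu_pos[of x] mu_pos[of y] False by (simp add: mat_def field_simps)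
  qed simp
  then show ?thesis by (simp add: transpose_def sym_generator_def vec_eq_iff)
qed

lemma sym_generator_selfadjoint:
  "(sym_generator P mu *v g) \<bullet> h = g \<bullet> (sym_generator P mu *v h)"
  by (rule symmetric_matrix_selfadjoint[OF transpose_sym_generator])

lemma eigenspace_negL_sqrt_weight:
  "sqrt_weight mu ` eigenspace_negL P l = {v. sym_generator P mu *v v = l *\<^sub>R v}"
proof -
  have "sym_generator P mu *v sqrt_weight mu f = l *\<^sub>R sqrt_weight mu f
      \<longleftrightarrow> f \<in> eigenspace_negL P l" for f
    using sqrt_weight_eq_iff[of "(mat 1 - P) *v f" "l *\<^sub>R f"]
    by (simp add: eigenspace_negL_def sym_generator_sqrt_weight
        linear_scale[OF linear_sqrt_weight])
  then show ?thesis
    using sqrt_weight_surj by (auto simp: image_iff) metis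
qed

lemma eigenvalues_negL_sym_generator:
  "eigenvalues_negL P = {l. \<exists>v. v \<noteq> 0 \<and> sym_generator P mu *v v = l *\<^sub>R v}"
proof (intro set_eqI)
  fix l
  have zero_iff: "sqrt_weight mu f = 0 \<longleftrightarrow> f = 0" for f
    using sqrt_weight_eq_iff[of f 0] by (simp add: linear_0[OF linear_sqrt_weight])
  have "l \<in> eigenvalues_negL P \<longleftrightarrow> (\<exists>f\<in>eigenspace_negL P l. f \<noteq> 0)"
    by (auto simp: eigenvalues_negL_def eigenspace_negL_def)
  also have "\<dots> \<longleftrightarrow> (\<exists>v\<in>sqrt_weight mu ` eigenspace_negL P l. v \<noteq> 0)"
    by (simp add: zero_iff)
  also have "\<dots> \<longleftrightarrow> (\<exists>v. v \<noteq> 0 \<and> sym_generator P mu *v v = l *\<^sub>R v)"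
    unfolding eigenspace_negL_sqrt_weight by auto
  finally show "l \<in> eigenvalues_negL P \<longleftrightarrow> l \<in> {l. \<exists>v. v \<noteq> 0 \<and> sym_generator P mu *v v = l *\<^sub>R v}"
    by simp
qed

lemma dim_eigenspace_negL:
  "dim (eigenspace_negL P l) = dim {v. sym_generator P mu *v v = l *\<^sub>R v}"
  using dim_image_eq[OF linear_sqrt_weight] eigenspace_negL_sqrt_weight inj_sqrt_weight
  by (metis inj_on_subset subset_UNIV)

lemma finite_eigenvalues_negL: "finite (eigenvalues_negL P)"
  unfolding eigenvalues_negL_sym_generator
  by (rule finite_eigenvalues_selfadjoint[OF sym_generator_selfadjoint])

lemma lam_le_if_rayleigh_le:
  assumes V: "subspace V" and k: "k < dim V"
    and rayleigh: "\<And>f. f \<in> V \<Longrightarrow> mu_inner mu ((mat 1 - P) *v f) f \<le> c * mu_inner mu f f"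
  shows "k < length (eigen_list P)" and "lam P k \<le> c"
proof -
  let ?S = "sym_generator P mu"
  have "dim V = dim (sqrt_weight mu ` V)"
    using dim_image_eq[OF linear_sqrt_weight] inj_sqrt_weight by (metis inj_on_subset subset_UNIV)
  also have "\<dots> \<le> dim {v. \<exists>l\<le>c. ?S *v v = l *\<^sub>R v}"
  proof (rule dim_le_dim_eigenvectors_if_rayleigh_le)
    show "linear ((*v) ?S)" by (rule matrix_vector_mul_linear)
    show "subspace (sqrt_weight mu ` V)"
      by (rule linear_subspace_image[OF linear_sqrt_weight V])
  next
    fix g assume "g \<in> sqrt_weight mu ` V"
    then obtain f where "f \<in> V" "g = sqrt_weight mu f" by blast
    then show "(?S *v g) \<bullet> g \<le> c * (g \<bullet> g)"
      using rayleigh by (simp add: sym_generator_sqrt_weight inner_sqrt_weight)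
  qed (rule sym_generator_selfadjoint)
  also have "\<dots> \<le> (\<Sum>l\<in>{l\<in>eigenvalues_negL P. l \<le> c}. dim {v. ?S *v v = l *\<^sub>R v})"
    using dim_eigenvectors_le_sum_dim_eigenspaces
      [OF finite_eigenvalues_selfadjoint[OF sym_generator_selfadjoint]]
    by (simp add: eigenvalues_negL_sym_generator)
  also have "\<dots> = length (filter (\<lambda>x. x \<le> c) (eigen_list P))"
    by (simp add: length_filter_eigen_list finite_eigenvalues_negL dim_eigenspace_negL)
  finally have "k < length (filter (\<lambda>x. x \<le> c) (eigen_list P))" using k by simp
  moreover have "sorted (eigen_list P)" by (simp add: eigen_list_def)
  ultimately show "k < length (eigen_list P)" and "lam P k \<le> c"
    using sorted_nth_le_if_length_filter_le by (auto simp: lam_def)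
qed

lemma lam_nonneg:
  assumes st: "stochastic P" and k: "k < CARD('n)"
  shows "0 \<le> lam P k"
proof -
  \<comment> \<open>A Rayleigh bound on the whole space shows that \<open>eigen_list P\<close> has at least
    \<open>CARD('n)\<close> entries, so \<open>lam P k\<close> is one of them.\<close>
  let ?S = "sym_generator P mu"
  obtain K where K: "\<And>g. norm (?S *v g) \<le> norm g * K"
    using bounded_linear.pos_bounded[OF matrix_vector_mul_bounded_linear] by blast
  have "mu_inner mu ((mat 1 - P) *v f) f \<le> K * mu_inner mu f f" for f
  proof -
    let ?g = "sqrt_weight mu f"
    have "(?S *v ?g) \<bullet> ?g \<le> norm (?S *v ?g) * norm ?g" by (rule norm_cauchy_schwarz)
    also have "\<dots> \<le> K * (?g \<bullet> ?g)"
      using mult_right_mono[OF K norm_ge_zero]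
      by (simp add: power2_norm_eq_inner[symmetric] power2_eq_square mult_ac)
    finally show ?thesis by (simp add: sym_generator_sqrt_weight inner_sqrt_weight)
  qed
  moreover have "k < dim (UNIV :: (real^'n) set)" using k by simp
  ultimately have "k < length (eigen_list P)"
    by (intro lam_le_if_rayleigh_le(1)[OF subspace_UNIV]) auto
  then have "lam P k \<in> set (eigen_list P)" by (simp add: lam_def)
  then have "lam P k \<in> eigenvalues_negL P"
    using finite_eigenvalues_negL by (auto simp: eigen_list_def split: if_splits)
  then show ?thesis by (rule eigenvalue_negL_nonneg[OF st])
qed

lemma meas_nonneg: "0 \<le> meas mu S"
  by (simp add: meas_def sum_nonneg mu_nonneg)

lemma meas_mono: "S \<subseteq> T \<Longrightarrow> meas mu S \<le> meas mu T"
  by (simp add: meas_def sum_mono2 mu_nonneg)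

lemma meas_Compl: "meas mu (- S) = 1 - meas mu S"
proof -
  have "(\<Sum>x\<in>UNIV. mu x) = (\<Sum>x\<in>UNIV - S. mu x) + (\<Sum>x\<in>S. mu x)"
    by (rule sum.subset_diff) auto
  then have "meas mu (- S) + meas mu S = (\<Sum>x\<in>UNIV. mu x)"
    by (simp add: meas_def Compl_eq_Diff_UNIV)
  then show ?thesis using reversible by (simp add: reversible_prob_def)
qed

lemma meas_Diff: "S \<subseteq> T \<Longrightarrow> meas mu (T - S) = meas mu T - meas mu S"
  by (simp add: meas_def sum_diff)

lemma dirichlet_le_if_locally_constant:
  assumes st: "stochastic P"
    and zero: "\<And>x. x \<in> R \<Longrightarrow> f$x = 0"
    and const: "\<And>x y. x \<notin> R \<Longrightarrow> y \<notin> R \<Longrightarrow> P$x$y \<noteq> 0 \<Longrightarrow> f$x = f$y"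
    and bound: "\<And>x. (f$x)\<^sup>2 \<le> S"
  shows "mu_inner mu ((mat 1 - P) *v f) f \<le> meas mu R * S"
proof -
  have P_nonneg: "0 \<le> P$x$y" and row_sum: "(\<Sum>y\<in>UNIV. P$x$y) = 1" for x y
    using st by (auto simp: stochastic_def)
  have "mu_inner mu ((mat 1 - P) *v f) f
      = (\<Sum>x\<in>UNIV. \<Sum>y\<in>UNIV. mu x * P$x$y * (f$x * (f$x - f$y)))"
    unfolding mu_inner_def generator_apply
  proof (rule sum.cong[OF refl])
    fix x
    have "(\<Sum>y\<in>UNIV. mu x * P$x$y * (f$x * (f$x - f$y)))
        = mu x * f$x * (f$x * (\<Sum>y\<in>UNIV. P$x$y) - (\<Sum>y\<in>UNIV. P$x$y * f$y))"
      by (simp add: algebra_simps sum_subtractf sum_distrib_left sum_distrib_right)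
    then show "mu x * (f$x - (\<Sum>y\<in>UNIV. P$x$y * f$y)) * f$x
        = (\<Sum>y\<in>UNIV. mu x * P$x$y * (f$x * (f$x - f$y)))"
      by (simp add: row_sum algebra_simps)
  qed
  also have "\<dots> \<le> (\<Sum>x\<in>UNIV. \<Sum>y\<in>UNIV. if y \<in> R then mu x * P$x$y * S else 0)"
  proof (intro sum_mono)
    fix x y
    have "0 \<le> mu x * P$x$y" by (simp add: mu_nonneg P_nonneg)
    moreover have "P$x$y = 0 \<or> f$x = 0 \<or> f$x = f$y" if "y \<notin> R"
      using that zero const by blast
    ultimately show "mu x * P$x$y * (f$x * (f$x - f$y)) \<le> (if y \<in> R then mu x * P$x$y * S else 0)"
      using zero bound[of x] by (auto simp: power2_eq_square mult_left_mono)
  qed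
  also have "\<dots> = (\<Sum>y\<in>R. \<Sum>x\<in>UNIV. mu y * P$y$x * S)"
    using reversible
    by (subst sum.swap) (simp add: sum.If_cases reversible_prob_def mult.commute)
  also have "\<dots> = (\<Sum>y\<in>R. mu y * S)"
    by (intro sum.cong refl)
      (simp add: sum_distrib_left[symmetric] sum_distrib_right[symmetric] row_sum)
  also have "\<dots> = meas mu R * S" by (simp add: meas_def sum_distrib_right)
  finally show ?thesis .
qed

lemma rayleigh_le_if_blockwise_constant:
  fixes k :: nat
  assumes st: "stochastic P"
    and disj: "\<And>i j. i \<le> k \<Longrightarrow> j \<le> k \<Longrightarrow> i \<noteq> j \<Longrightarrow> K i \<inter> K j = {}"
    and no_edge: "\<And>i j x y. i \<le> k \<Longrightarrow> j \<le> k \<Longrightarrow> i \<noteq> j \<Longrightarrow> x \<in> K i \<Longrightarrow> y \<in> K j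
      \<Longrightarrow> P$x$y = 0"
    and large: "\<And>i. i \<le> k \<Longrightarrow> a \<le> meas mu (K i)" and a: "0 < a"
    and outside: "\<And>x. x \<notin> (\<Union>i\<le>k. K i) \<Longrightarrow> f$x = 0"
    and inside: "\<And>i x. i \<le> k \<Longrightarrow> x \<in> K i \<Longrightarrow> f$x = c i"
  shows "mu_inner mu ((mat 1 - P) *v f) f \<le> (meas mu (- (\<Union>i\<le>k. K i)) / a) * mu_inner mu f f"
proof -
  define R where "R = - (\<Union>i\<le>k. K i)"
  define S where "S = (\<Sum>i\<le>k. (c i)\<^sup>2)"
  have dirichlet: "mu_inner mu ((mat 1 - P) *v f) f \<le> meas mu R * S"
  proof (rule dirichlet_le_if_locally_constant[OF st])
    show "f$x = 0" if "x \<in> R" for x using outside that by (simp add: R_def)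
  next
    fix x y assume "x \<notin> R" "y \<notin> R" "P$x$y \<noteq> 0"
    then obtain i j where ij: "i \<le> k" "x \<in> K i" "j \<le> k" "y \<in> K j"
      by (auto simp: R_def)
    have "i = j"
      using no_edge[OF ij(1,3) _ ij(2,4)] \<open>P$x$y \<noteq> 0\<close> by auto
    then show "f$x = f$y" using inside ij by simp
  next
    fix x show "(f$x)\<^sup>2 \<le> S"
    proof (cases "x \<in> R")
      case False
      then obtain i where i: "i \<le> k" "x \<in> K i" by (auto simp: R_def)
      have "(c i)\<^sup>2 \<le> S"
        unfolding S_def by (rule member_le_sum) (use i in auto)
      then show ?thesis using inside[OF i] by simp
    qed (simp add: outside R_def S_def sum_nonneg)
  qed
  have "a * S \<le> (\<Sum>i\<le>k. meas mu (K i) * (c i)\<^sup>2)"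
    unfolding S_def sum_distrib_left by (intro sum_mono mult_right_mono large) auto
  also have "\<dots> = (\<Sum>i\<le>k. \<Sum>x\<in>K i. mu x * f$x * f$x)"
    using inside by (auto simp: meas_def sum_distrib_right power2_eq_square intro!: sum.cong)
  also have "\<dots> = (\<Sum>x\<in>(\<Union>i\<le>k. K i). mu x * f$x * f$x)"
    using disj by (intro sum.UNION_disjoint[symmetric]) auto
  also have "\<dots> \<le> mu_inner mu f f"
    unfolding mu_inner_def by (intro sum_mono2) (auto simp: mu_nonneg mult.assoc)
  finally have norm: "a * S \<le> mu_inner mu f f" .
  have "meas mu R * S = (meas mu R / a) * (a * S)" using a by simp
  also have "\<dots> \<le> (meas mu R / a) * mu_inner mu f f"
    using norm a meas_nonneg[of R] by (intro mult_left_mono) auto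
  finally show ?thesis using dirichlet by (simp add: R_def)
qed

lemma lam_le_if_separated_family:
  assumes st: "stochastic P"
    and disj: "\<And>i j. i \<le> k \<Longrightarrow> j \<le> k \<Longrightarrow> i \<noteq> j \<Longrightarrow> K i \<inter> K j = {}"
    and no_edge: "\<And>i j x y. i \<le> k \<Longrightarrow> j \<le> k \<Longrightarrow> i \<noteq> j \<Longrightarrow> x \<in> K i \<Longrightarrow> y \<in> K j
      \<Longrightarrow> P$x$y = 0"
    and large: "\<And>i. i \<le> k \<Longrightarrow> a \<le> meas mu (K i)" and a: "0 < a"
  shows "lam P k \<le> meas mu (- (\<Union>i\<le>k. K i)) / a"
proof -
  have ne: "K i \<noteq> {}" if "i \<le> k" for i
    using large[OF that] a by (auto simp: meas_def)
  define pt where "pt i = (SOME x. x \<in> K i)" for i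
  have pt: "pt i \<in> K i" if "i \<le> k" for i
    using ne[OF that] by (simp add: pt_def some_in_eq)
  define V :: "(real^'n) set"
    where "V = {f. (\<forall>x. x \<notin> (\<Union>i\<le>k. K i) \<longrightarrow> f$x = 0) \<and> (\<forall>i\<le>k. \<forall>x\<in>K i. f$x = f$pt i)}"
  have "subspace V" by (auto simp: subspace_def V_def)
  have "indicator_vec (K i) \<in> V" if "i \<le> k" for i
    using disj[OF that] that pt by (auto simp: V_def indicator_vec_def indicator_def)
  then have "dim ((\<lambda>i. indicator_vec (K i)) ` {..k}) \<le> dim V" by (intro dim_subset) auto
  moreover have "dim ((\<lambda>i. indicator_vec (K i)) ` {..k}) = Suc k"
    using disj ne by (subst dim_indicator_vecs) auto
  ultimately have "k < dim V" by simp
  moreover have "mu_inner mu ((mat 1 - P) *v f) f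
      \<le> (meas mu (- (\<Union>i\<le>k. K i)) / a) * mu_inner mu f f" if "f \<in> V" for f
    using that by (intro rayleigh_le_if_blockwise_constant[OF st disj no_edge large a])
      (auto simp: V_def)
  ultimately show ?thesis using lam_le_if_rayleigh_le(2)[OF \<open>subspace V\<close>] by blast
qed

end

section \<open>Graph distance and neighbourhoods\<close>

lemma irreducible_reversible_pos:
  assumes st: "stochastic P" and irr: "irreducible P" and rev: "reversible_prob P mu"
  shows "0 < mu x"
proof -
  have mu_nonneg: "0 \<le> mu y" for y using rev by (simp add: reversible_prob_def)
  have propagate: "0 < mu z" if "0 < mu y" "(y, z) \<in> edges P" for y z
  proof -
    have "0 < P$y$z * mu y" using that by (simp add: edges_def)
    also have "\<dots> = P$z$y * mu z" using rev by (simp add: reversible_prob_def)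
    finally have "0 < P$z$y * mu z" .
    moreover have "0 \<le> P$z$y" using st by (simp add: stochastic_def)
    ultimately show ?thesis by (auto simp: zero_less_mult_iff)
  qed
  have "\<exists>x0. mu x0 \<noteq> 0"
    by (rule ccontr) (use rev in \<open>simp add: reversible_prob_def\<close>)
  then obtain x0 where "0 < mu x0" using mu_nonneg by (metis less_eq_real_def)
  have "(x0, x) \<in> (edges P)\<^sup>+" using irr by (simp add: irreducible_def)
  then show ?thesis
    by (induction rule: trancl_induct) (use \<open>0 < mu x0\<close> propagate in blast)+
qed

lemma gdist_le: "(x, y) \<in> edges P ^^ n \<Longrightarrow> gdist P x y \<le> n"
  unfolding gdist_def by (rule Least_le)

lemma gdist_refl [simp]: "gdist P x x = 0"
  by (metis gdist_le le_zero_eq relpow_0_I)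

lemma gdist_le_1_if_edge: "0 < P$x$y \<Longrightarrow> gdist P x y \<le> 1"
  by (rule gdist_le) (simp add: edges_def)

lemma gdist_relpow:
  assumes "irreducible P"
  shows "(x, y) \<in> edges P ^^ gdist P x y"
proof -
  have "(x, y) \<in> (edges P)\<^sup>+" using assms by (simp add: irreducible_def)
  then have "\<exists>n. (x, y) \<in> edges P ^^ n" using trancl_power by blast
  then show ?thesis unfolding gdist_def by (rule LeastI_ex)
qed

lemma gdist_triangle:
  assumes "irreducible P"
  shows "gdist P x z \<le> gdist P x y + gdist P y z"
proof -
  have "(x, z) \<in> edges P ^^ gdist P x y O edges P ^^ gdist P y z"
    using gdist_relpow[OF assms, of x y] gdist_relpow[OF assms, of y z] by blast
  then show ?thesis by (intro gdist_le) (simp add: relpow_add)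
qed

lemma enat_INF_le_iff: "(INF y\<in>S. enat (g y)) \<le> enat m \<longleftrightarrow> (\<exists>y\<in>S. g y \<le> m)"
proof
  assume le: "(INF y\<in>S. enat (g y)) \<le> enat m"
  then have "S \<noteq> {}" by (auto simp: top_enat_def)
  then have "(INF y\<in>S. enat (g y)) \<in> (\<lambda>y. enat (g y)) ` S"
    unfolding Inf_enat_def by (auto intro: LeastI)
  then show "\<exists>y\<in>S. g y \<le> m" using le by auto
qed (meson INF_lower2 enat_ord_simps(1))

lemma mem_nbhd_iff: "x \<in> nbhd P S r \<longleftrightarrow> (\<exists>y\<in>S. gdist P x y \<le> r)"
  by (simp add: nbhd_def set_dist_def enat_INF_le_iff)

lemma subset_nbhd: "S \<subseteq> nbhd P S r"
proof
  fix x assume "x \<in> S"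
  then show "x \<in> nbhd P S r" by (simp add: mem_nbhd_iff) (rule bexI[of _ x], simp_all)
qed

lemma nbhd_mono:
  assumes "r \<le> s"
  shows "nbhd P S r \<subseteq> nbhd P S s"
proof
  fix x assume "x \<in> nbhd P S r"
  then obtain y where "y \<in> S" "gdist P x y \<le> r" unfolding mem_nbhd_iff by blast
  moreover from this(2) have "gdist P x y \<le> s" using assms by linarith
  ultimately show "x \<in> nbhd P S s" unfolding mem_nbhd_iff by blast
qed

lemma nbhd_UN: "nbhd P (\<Union>i\<in>I. A i) r = (\<Union>i\<in>I. nbhd P (A i) r)"
proof (intro set_eqI iffI)
  fix x assume "x \<in> nbhd P (\<Union>i\<in>I. A i) r"
  then obtain i y where "i \<in> I" "y \<in> A i" "gdist P x y \<le> r" by (auto simp: mem_nbhd_iff)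
  then show "x \<in> (\<Union>i\<in>I. nbhd P (A i) r)" by (auto simp: mem_nbhd_iff)
next
  fix x assume "x \<in> (\<Union>i\<in>I. nbhd P (A i) r)"
  then obtain i y where "i \<in> I" "y \<in> A i" "gdist P x y \<le> r" by (auto simp: mem_nbhd_iff)
  then show "x \<in> nbhd P (\<Union>i\<in>I. A i) r" by (auto simp: mem_nbhd_iff)
qed

lemma set_dist_le_gdist: "a \<in> A \<Longrightarrow> b \<in> B \<Longrightarrow> set_dist P A B \<le> enat (gdist P a b)"
  unfolding set_dist_def by (meson INF_lower2 order_refl)

lemma le_gdist_if_le_INF_set_dist:
  assumes "c \<le> (INF ij\<in>{(i, j). i \<in> I \<and> j \<in> I \<and> i \<noteq> j}. set_dist P (A (fst ij)) (A (snd ij)))"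
    and "i \<in> I" "j \<in> I" "i \<noteq> j" "a \<in> A i" "b \<in> A j"
  shows "c \<le> enat (gdist P a b)"
proof -
  have "c \<le> set_dist P (A i) (A j)"
    using assms(1) by (rule order.trans) (rule INF_lower2[of "(i, j)"], use assms(2-4) in auto)
  also have "\<dots> \<le> enat (gdist P a b)" by (rule set_dist_le_gdist[OF assms(5,6)])
  finally show ?thesis .
qed

lemma in_Delta_union_bound:
  fixes A :: "nat \<Rightarrow> 'n::finite set"
  assumes delta: "in_Delta k (\<lambda>i. meas mu (A i))"
    and disj: "\<And>i j. i \<in> {1..k} \<Longrightarrow> j \<in> {1..k} \<Longrightarrow> i \<noteq> j \<Longrightarrow> A i \<inter> A j = {}"
    and i: "i \<in> {1..k}"
  shows "1 - meas mu (\<Union>j\<in>{1..k}. A j) \<le> meas mu (A i)"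
proof -
  have "meas mu (\<Union>j\<in>{1..k}. A j) = (\<Sum>j=1..k. meas mu (A j))"
    unfolding meas_def using disj by (intro sum.UNION_disjoint) auto
  moreover have "1 \<le> meas mu (A i) + (\<Sum>j=1..k. meas mu (A j))"
    using delta i unfolding in_Delta_def by blast
  ultimately show ?thesis by simp
qed

locale reversible_chain = positive_reversible +
  assumes stochastic: "stochastic P" and irreducible: "irreducible P"
begin

lemma edge_sym:
  assumes "0 < P$x$y"
  shows "0 < P$y$x"
proof -
  have "0 < P$x$y * mu x" using assms mu_pos[of x] by simp
  also have "\<dots> = P$y$x * mu y" using reversible by (simp add: reversible_prob_def)
  finally show ?thesis using mu_pos[of y] by (simp add: zero_less_mult_iff)
qed

lemma gdist_sym: "gdist P x y = gdist P y x"
proof -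
  have "(y, x) \<in> edges P ^^ n" if "(x, y) \<in> edges P ^^ n" for x y n
    using that
  proof (induction n arbitrary: y)
    case (Suc n)
    then obtain z where "(x, z) \<in> edges P ^^ n" "(z, y) \<in> edges P" by auto
    then have "(y, z) \<in> edges P" "(z, x) \<in> edges P ^^ n"
      using Suc.IH edge_sym by (auto simp: edges_def)
    then show ?case by (rule relpow_Suc_I2)
  qed simp
  then have "gdist P y x \<le> gdist P x y" for x y
    using gdist_relpow[OF irreducible] gdist_le by blast
  then show ?thesis by (metis le_antisym)
qed

lemma nbhd_Suc_if_edge:
  assumes "x \<in> nbhd P S r" and "0 < P$x$y"
  shows "y \<in> nbhd P S (Suc r)"
proof -
  obtain a where "a \<in> S" "gdist P x a \<le> r" using assms(1) by (auto simp: mem_nbhd_iff)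
  moreover have "gdist P y x \<le> 1" using gdist_le_1_if_edge[OF assms(2)] gdist_sym by simp
  ultimately have "gdist P y a \<le> Suc r"
    using gdist_triangle[OF irreducible, where x=y and y=x and z=a] by linarith
  then show ?thesis using \<open>a \<in> S\<close> unfolding mem_nbhd_iff by blast
qed

lemma nbhds_disjoint_if_far:
  assumes "\<And>a b. a \<in> S \<Longrightarrow> b \<in> T \<Longrightarrow> r + s < gdist P a b"
  shows "nbhd P S r \<inter> nbhd P T s = {}"
proof -
  have False if "a \<in> S" "gdist P x a \<le> r" "b \<in> T" "gdist P x b \<le> s" for x a b
    using assms[OF that(1,3)] gdist_triangle[OF irreducible, where x=a and y=x and z=b]
      gdist_sym[of a x] that
    by simp
  then show ?thesis by (auto simp: mem_nbhd_iff)
qed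

end

section \<open>Growth of neighbourhoods of separated sets\<close>

locale separated_family = reversible_chain +
  fixes A :: "nat \<Rightarrow> 'n::finite set" and k n :: nat
  assumes far: "\<And>i j a b. i \<in> {1..k} \<Longrightarrow> j \<in> {1..k} \<Longrightarrow> i \<noteq> j \<Longrightarrow> a \<in> A i \<Longrightarrow> b \<in> A j
      \<Longrightarrow> 2 * n \<le> gdist P a b"
    and large: "\<And>i. i \<in> {1..k} \<Longrightarrow> 1 - meas mu (\<Union>j\<in>{1..k}. A j) \<le> meas mu (A i)"
begin

abbreviation B :: "'n set" where "B \<equiv> \<Union>i\<in>{1..k}. A i"

definition layer :: "nat \<Rightarrow> nat \<Rightarrow> 'n set" where
  "layer m i = (if i = 0 then - nbhd P B m else nbhd P (A i) (m - 1))"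

lemma layer_subset_nbhd: "i \<in> {1..k} \<Longrightarrow> layer m i \<subseteq> nbhd P (A i) m"
  using nbhd_mono[of "m - 1" m] by (auto simp: layer_def)

lemma nbhd_disjoint_layer:
  assumes m: "1 \<le> m" "m \<le> n" and i: "i \<in> {1..k}" and j: "j \<le> k" "j \<noteq> i"
  shows "nbhd P (A i) m \<inter> layer m j = {}"
proof (cases "j = 0")
  case True
  have "nbhd P (A i) m \<subseteq> nbhd P B m" using i by (auto simp: nbhd_UN)
  then show ?thesis using True by (auto simp: layer_def)
next
  case False
  then have j': "j \<in> {1..k}" using j by auto
  have "nbhd P (A i) m \<inter> nbhd P (A j) (m - 1) = {}"
  proof (rule nbhds_disjoint_if_far)
    fix a b assume "a \<in> A i" "b \<in> A j"
    then show "m + (m - 1) < gdist P a b" using far[OF i j'] j m by fastforce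
  qed
  then show ?thesis using False by (simp add: layer_def)
qed

lemma layers_disjoint:
  assumes m: "1 \<le> m" "m \<le> n" and ij: "i \<le> k" "j \<le> k" "i \<noteq> j"
  shows "layer m i \<inter> layer m j = {}"
proof (cases "i = 0")
  case True
  then have "j \<in> {1..k}" using ij by auto
  then show ?thesis using nbhd_disjoint_layer[OF m, of j i] layer_subset_nbhd[of j m] ij by auto
next
  case False
  then have "i \<in> {1..k}" using ij by auto
  then show ?thesis using nbhd_disjoint_layer[OF m, of i j] layer_subset_nbhd[of i m] ij by auto
qed

lemma edge_from_layer:
  assumes "1 \<le> m" "i \<in> {1..k}" "x \<in> layer m i" "0 < P$x$y"
  shows "y \<in> nbhd P (A i) m"
  using nbhd_Suc_if_edge[of x "A i" "m - 1" y] assms by (auto simp: layer_def)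

lemma no_edge_between_layers:
  assumes m: "1 \<le> m" "m \<le> n" and ij: "i \<le> k" "j \<le> k" "i \<noteq> j"
    and xy: "x \<in> layer m i" "y \<in> layer m j"
  shows "P$x$y = 0"
proof (rule ccontr)
  assume "P$x$y \<noteq> 0"
  then have edge: "0 < P$x$y" using stochastic by (simp add: stochastic_def less_le)
  show False
  proof (cases "i = 0")
    case True
    then have "j \<in> {1..k}" using ij by auto
    then show False
      using nbhd_disjoint_layer[OF m, of j i] edge_from_layer[OF m(1) _ xy(2) edge_sym[OF edge]]
        ij xy(1) by auto
  next
    case False
    then have "i \<in> {1..k}" using ij by auto
    then show False
      using nbhd_disjoint_layer[OF m, of i j] edge_from_layer[OF m(1) _ xy(1) edge] ij xy(2)
      by auto
  qed
qed

lemma complement_nbhd_decay: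
  assumes m: "1 \<le> m" "m \<le> n"
  shows "meas mu (- nbhd P B m) * (1 + lam P k) \<le> meas mu (- nbhd P B (m - 1))"
proof (cases "meas mu (- nbhd P B m) = 0")
  case False
  have "lam P k \<le> meas mu (- (\<Union>i\<le>k. layer m i)) / meas mu (- nbhd P B m)"
  proof (rule lam_le_if_separated_family[OF stochastic layers_disjoint[OF m]
        no_edge_between_layers[OF m]])
    show "meas mu (- nbhd P B m) \<le> meas mu (layer m i)" if "i \<le> k" for i
    proof (cases "i = 0")
      case False
      then have i: "i \<in> {1..k}" using that by auto
      have "meas mu (- nbhd P B m) \<le> meas mu (- B)"
        using subset_nbhd[of B P m] by (intro meas_mono) auto
      also have "\<dots> \<le> meas mu (A i)" using large[OF i] by (simp only: meas_Compl)
      also have "\<dots> \<le> meas mu (layer m i)"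
        using False subset_nbhd[of "A i" P "m - 1"] by (simp add: layer_def meas_mono)
      finally show ?thesis .
    qed (simp add: layer_def)
    show "0 < meas mu (- nbhd P B m)" using False meas_nonneg by (simp add: less_le)
  qed
  moreover have "- (\<Union>i\<le>k. layer m i) = nbhd P B m - nbhd P B (m - 1)"
  proof -
    have "{..k} = insert 0 {1..k}" by auto
    then have "(\<Union>i\<le>k. layer m i) = layer m 0 \<union> (\<Union>i\<in>{1..k}. layer m i)" by simp
    also have "(\<Union>i\<in>{1..k}. layer m i) = (\<Union>i\<in>{1..k}. nbhd P (A i) (m - 1))"
      by (rule SUP_cong) (auto simp: layer_def)
    finally show ?thesis by (simp add: layer_def nbhd_UN Diff_eq)
  qed
  moreover have "meas mu (nbhd P B m - nbhd P B (m - 1))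
      = meas mu (- nbhd P B (m - 1)) - meas mu (- nbhd P B m)"
    using nbhd_mono[of "m - 1" m P B] by (simp add: meas_Diff meas_Compl)
  ultimately have "lam P k * meas mu (- nbhd P B m)
      \<le> meas mu (- nbhd P B (m - 1)) - meas mu (- nbhd P B m)"
    using False meas_nonneg[of "- nbhd P B m"] by (simp add: pos_le_divide_eq)
  then show ?thesis by (simp add: algebra_simps)
qed (simp add: meas_nonneg)


lemma complement_nbhd_bound:
  assumes lam: "0 \<le> lam P k" and "m \<le> n"
  shows "meas mu (- nbhd P B m) * (1 + lam P k) ^ m \<le> 1 - meas mu B"
  using \<open>m \<le> n\<close>
proof (induction m)
  case 0
  have "meas mu (- nbhd P B 0) \<le> meas mu (- B)"
    using subset_nbhd[of B P 0] by (intro meas_mono) auto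
  then show ?case by (simp only: meas_Compl power_0 mult_1_right)
next
  case (Suc m)
  have "meas mu (- nbhd P B (Suc m)) * (1 + lam P k) ^ Suc m
      = (meas mu (- nbhd P B (Suc m)) * (1 + lam P k)) * (1 + lam P k) ^ m"
    by (simp add: mult_ac)
  also have "\<dots> \<le> meas mu (- nbhd P B m) * (1 + lam P k) ^ m"
    using complement_nbhd_decay[of "Suc m"] Suc.prems lam by (intro mult_right_mono) auto
  also have "\<dots> \<le> 1 - meas mu B" using Suc by simp
  finally show ?case .
qed

lemma k_less_card:
  assumes "1 \<le> n" and "meas mu B < 1"
  shows "k < CARD('n)"
proof -
  have ne: "A i \<noteq> {}" if "i \<in> {1..k}" for i
    using large[OF that] assms(2) by (auto simp: meas_def)
  have "A i \<inter> A j = {}" if "i \<in> {1..k}" "j \<in> {1..k}" "i \<noteq> j" for i j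
    using far[OF that] assms(1) by fastforce
  then have "card B = (\<Sum>i\<in>{1..k}. card (A i))" by (intro card_UN_disjoint) auto
  also have "\<dots> \<ge> (\<Sum>i\<in>{1..k}. 1)"
    using ne by (intro sum_mono) (simp add: Suc_le_eq card_gt_0_iff)
  finally have "k \<le> card B" by simp
  moreover have "B \<noteq> UNIV"
  proof
    assume "B = UNIV"
    then show False using assms(2) reversible by (simp add: meas_def reversible_prob_def)
  qed
  then have "card B < CARD('n)" by (simp add: psubset_card_mono psubsetI)
  ultimately show ?thesis by simp
qed

lemma nbhd_measure_bound:
  assumes "1 \<le> n"
  shows "1 - (1 - meas mu B) / (1 + lam P k) ^ n \<le> meas mu (nbhd P B n)"
proof (cases "meas mu B < 1")
  case True
  have lam: "0 \<le> lam P k" by (rule lam_nonneg[OF stochastic k_less_card[OF assms True]])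
  have "meas mu (- nbhd P B n) * (1 + lam P k) ^ n \<le> 1 - meas mu B"
    by (rule complement_nbhd_bound[OF lam order_refl])
  then have "meas mu (- nbhd P B n) \<le> (1 - meas mu B) / (1 + lam P k) ^ n"
    using lam by (simp add: pos_le_divide_eq)
  then show ?thesis using meas_Compl[of "nbhd P B n"] by linarith
next
  case False
  have "meas mu B \<le> meas mu (nbhd P B n)" by (rule meas_mono[OF subset_nbhd])
  moreover have "meas mu B \<le> 1" using meas_Compl[of B] meas_nonneg[of "- B"] by linarith
  ultimately have "meas mu B = 1" "1 \<le> meas mu (nbhd P B n)" using False by linarith+
  then show ?thesis by simp
qed

end

theorem theorem3p1:
  fixes P :: "real^'n^'n" and mu :: "'n \<Rightarrow> real"
    and k :: nat and A :: "nat \<Rightarrow> 'n set" and n :: nat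
  assumes "stochastic P" and "irreducible P" and "reversible_prob P mu"
    and "k \<ge> 1"
    and "(INF ij\<in>{(i, j). i \<in> {1..k} \<and> j \<in> {1..k} \<and> i \<noteq> j}.
            set_dist P (A (fst ij)) (A (snd ij))) \<ge> 1"
    and "in_Delta k (\<lambda>i. meas mu (A i))"
    and "1 \<le> n"
    and "2 * enat n \<le> (INF ij\<in>{(i, j). i \<in> {1..k} \<and> j \<in> {1..k} \<and> i \<noteq> j}.
            set_dist P (A (fst ij)) (A (snd ij)))"
  shows "meas mu (nbhd P (\<Union>i\<in>{1..k}. A i) n)
           \<ge> 1 - (1 - meas mu (\<Union>i\<in>{1..k}. A i)) / (1 + lam P k) ^ n"
proof -
  interpret reversible_chain P mu
    using assms(1-3) irreducible_reversible_pos by unfold_locales auto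
  have far: "2 * n \<le> gdist P a b"
    if "i \<in> {1..k}" "j \<in> {1..k}" "i \<noteq> j" "a \<in> A i" "b \<in> A j" for i j a b
    using le_gdist_if_le_INF_set_dist[OF assms(8) that] by (simp add: numeral_eq_enat)
  have "A i \<inter> A j = {}" if "i \<in> {1..k}" "j \<in> {1..k}" "i \<noteq> j" for i j
    using far[OF that] assms(7) by fastforce
  then have "1 - meas mu (\<Union>j\<in>{1..k}. A j) \<le> meas mu (A i)" if "i \<in> {1..k}" for i
    using in_Delta_union_bound[OF assms(6)] that by blast
  then interpret separated_family P mu A k n
    using far by unfold_locales
  show ?thesis using nbhd_measure_bound[OF assms(7)] by simp
qed

end
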